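(* Let $N,k,d$ be integers with $2\leq N\leq k$ and $d\geq 1$, and let $j$ be any non-negative integer. Set $m=1+(k-N)d$ and define the rational number \[ w(\sigma_{j}(\mathcal{O}_{h^{N-2-j}})\mathcal{O}_{h^{-m}}|(\mathcal{O}_{h})^{m})_{0,2|m}:=\frac{1}{(2 \pi \sqrt{-1})^{d+1}} \oint_{C_{0}} \frac{dz_{0}}{(z_{0})^{N}} \oint_{C_{1}} \frac{dz_{1}}{(z_{1})^{N}} \cdots \oint_{C_{d}} \frac{dz_{d}}{(z_{d})^{N}}\,(z_{0})^{N-2-j} (z_{1} - z_{0})^{j} \Bigl(\prod_{l=1}^{d} e^{k}(z_{l-1},z_{l}) \Bigr)\Bigl(\prod_{l=1}^{d-1} \frac{1}{kz_{l} (2z_{l} - z_{l-1} - z_{l+1})}\Bigr)\frac{1}{(z_{d})^{m}}\left( d + \frac{z_0}{z_1 - z_0} \right)^{m}, \] where $e^{k}(z,w)=\prod_{i=0}^{k}(iz+(k-i)w)$. Then \[ \frac{1}{k}\,w(\sigma_{j}(\mathcal{O}_{h^{N-2-j}})\mathcal{O}_{h^{-m}}|(\mathcal{O}_{h})^{m})_{0,2|m} =\frac{1}{j!}\frac{\partial^{j}}{\partial \varepsilon^{j}}\left.\left(\frac{\prod_{r=1}^{kd}(r+k\varepsilon)}{\prod_{r=1}^{d}(r+\varepsilon)^N}\right) \right|_{\varepsilon=0}. \]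
   Context: In the residue integral, the operation $\frac{1}{2 \pi \sqrt{-1}} \oint_{C_{i}} dz_{i}$ means taking residues at $z_{i} = 0$ for $i = 0$ and $i=d$, and taking (the sum of) residues at $z_{i} = 0$ and $z_i=\frac{z_{i-1} + z_{i+1}}{2}$ for $i = 1 , \ldots , d-1$. The residue integrals are taken in ascending order with respect to the subscript of the $z_{i}$'s (i.e. from left to right as written: first $z_0$, then $z_1$, ..., finally $z_d$). An empty product (e.g. $\prod_{l=1}^{d-1}$ when $d=1$) equals $1$. The symbol $w(\sigma_{j}(\mathcal{O}_{h^{N-2-j}})\mathcal{O}_{h^{-m}}|(\mathcal{O}_{h})^{m})_{0,2|m}$ is just a name for the number defined by this residue integral. *)

theory Defs
  imports "HOL-Complex_Analysis.Complex_Analysis"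
begin

definition ek :: "nat \<Rightarrow> complex \<Rightarrow> complex \<Rightarrow> complex" where
  "ek k z w = (\<Prod>i=0..k. of_nat i * z + of_nat (k - i) * w)"

definition integrand :: "nat \<Rightarrow> nat \<Rightarrow> nat \<Rightarrow> nat \<Rightarrow> (nat \<Rightarrow> complex) \<Rightarrow> complex" where
  "integrand N k d j z =
     (let m = 1 + (k - N) * d in
      (\<Prod>l=0..d. 1 / (z l) ^ N)
      * (z 0) powi (int N - 2 - int j) * (z 1 - z 0) ^ j
      * (\<Prod>l=1..d. ek k (z (l - 1)) (z l))
      * (\<Prod>l=1..d-1. 1 / (of_nat k * z l * (2 * z l - z (l - 1) - z (l + 1))))
      * (1 / (z d) ^ m) * (of_nat d + z 0 / (z 1 - z 0)) ^ m)"

text \<open>Possible values c such that, after the residue in z_i has been taken,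
  z_i has been replaced by c * z_(i+1) (c = 0 for the residue at 0,
  c = 1/(2 - a) for the residue at z_i = (z_(i-1) + z_(i+1))/2 when z_(i-1) = a * z_i).\<close>
fun coef_set :: "nat \<Rightarrow> complex set" where
  "coef_set 0 = {0}"
| "coef_set (Suc i) = insert 0 ((\<lambda>a. 1 / (2 - a)) ` coef_set i)"

definition res_points :: "nat \<Rightarrow> nat \<Rightarrow> (nat \<Rightarrow> complex) \<Rightarrow> complex set" where
  "res_points d i z =
     (if i = 0 \<or> i \<ge> d then {0}
      else insert 0 ((\<lambda>a. z (i + 1) / (2 - a)) ` coef_set (i - 1)))"

definition res_step :: "nat \<Rightarrow> nat \<Rightarrow> ((nat \<Rightarrow> complex) \<Rightarrow> complex) \<Rightarrow> (nat \<Rightarrow> complex) \<Rightarrow> complex" where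
  "res_step d i F z = (\<Sum>p\<in>res_points d i z. residue (\<lambda>w. F (z(i := w))) p)"

fun iter_res :: "nat \<Rightarrow> nat \<Rightarrow> ((nat \<Rightarrow> complex) \<Rightarrow> complex) \<Rightarrow> (nat \<Rightarrow> complex) \<Rightarrow> complex" where
  "iter_res d 0 F = res_step d 0 F"
| "iter_res d (Suc i) F = res_step d (Suc i) (iter_res d i F)"

definition w_num :: "nat \<Rightarrow> nat \<Rightarrow> nat \<Rightarrow> nat \<Rightarrow> complex" where
  "w_num N k d j = iter_res d d (integrand N k d j) (\<lambda>_. 0)"

end

theory Submission
  imports Defs
begin

(* The substitution z_0 = z_1 e/(1+e) turns the residue in z_0 into the residue at e = 0 of a
   kernel K_0(e, z).  Inductively, after the residues in z_0, ..., z_i have been taken one is left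
   with the residue at e = 0 of a kernel K_i(e, z) which, as a function of z_(i+1), has a single
   simple pole, at z_(i+1) = z_(i+2) (e+i+1)/(e+i+2).  Interchanging the residue in z_(i+1) with the
   one in e (Fubini on small circles), only the residue point z_(i+2) (i+1)/(i+2), the limit of that
   pole as e -> 0, contributes, and Cauchy's formula produces K_(i+1).  Finally
   K_(d-1)(e, z) = k Phi(e) / (e^(j+1) z_d) with Phi the rational function on the right-hand side,
   so the residue in z_d leaves k times the j-th Taylor coefficient of Phi at 0. *)

section \<open>Iterated residues\<close>

lemma residue_eqI:
  assumes "e > 0" "\<And>r. 0 < r \<Longrightarrow> r < e \<Longrightarrow> (f has_contour_integral 2*pi*\<i>*X) (circlepath p r)"
  shows "residue f p = X"
proof -
  let ?P = "\<lambda>int. \<exists>e>0. \<forall>\<epsilon>>0. \<epsilon><e \<longrightarrow> (f has_contour_integral 2*pi*\<i>*int) (circlepath p \<epsilon>)"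
  have PX: "?P X" using assms by blast
  have uniq: "int = X" if "?P int" for int
  proof -
    from that obtain e' where e': "e' > 0" "\<forall>\<epsilon>>0. \<epsilon><e' \<longrightarrow> (f has_contour_integral 2*pi*\<i>*int) (circlepath p \<epsilon>)" by blast
    define r where "r = min e e' / 2"
    have r: "r > 0" "r < e" "r < e'" using assms(1) e'(1) by (auto simp: r_def)
    have "2*pi*\<i>*int = 2*pi*\<i>*X"
      using has_contour_integral_unique[OF e'(2)[rule_format, OF r(1) r(3)] assms(2)[OF r(1) r(2)]] .
    thus ?thesis by simp
  qed
  show ?thesis unfolding residue_def
    using someI[of ?P X, OF PX] uniq by blast
qed


lemma continuous_on_contour_integral_circlepath_param:
  fixes K :: "complex \<Rightarrow> complex \<Rightarrow> complex"
  assumes "continuous_on (sphere 0 \<delta> \<times> S) (\<lambda>(e,w). K e w)" "\<delta> \<ge> 0"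
  shows "continuous_on S (\<lambda>w. contour_integral (circlepath 0 \<delta>) (\<lambda>e. K e w))"
proof -
  have eq: "contour_integral (circlepath 0 \<delta>) (\<lambda>e. K e w) =
     integral (cbox 0 1) (\<lambda>t. K (circlepath 0 \<delta> t) w * (2 * pi * \<i> * \<delta> * exp (2 * of_real pi * \<i> * t)))" for w
    unfolding contour_integral_integral vector_derivative_circlepath by simp
  have img: "norm (circlepath 0 \<delta> t) = \<delta>" for t
    using assms(2) by (simp add: circlepath norm_mult)
  have "continuous_on (S \<times> cbox 0 1) (\<lambda>(w, t). K (circlepath 0 \<delta> t) w * (2 * pi * \<i> * \<delta> * exp (2 * of_real pi * \<i> * t)))"
  proof -
    have c1: "continuous_on (S \<times> cbox 0 1) (\<lambda>x. (circlepath 0 \<delta> (snd x), fst x))"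
      unfolding circlepath by (intro continuous_intros)
    have "continuous_on (S \<times> cbox 0 1) ((\<lambda>(e,w). K e w) \<circ> (\<lambda>x. (circlepath 0 \<delta> (snd x), fst x)))"
      by (rule continuous_on_compose[OF c1 continuous_on_subset[OF assms(1)]]) (auto simp: img dist_norm)
    then show ?thesis
      by (auto simp: o_def case_prod_beta intro!: continuous_intros)
  qed
  from integral_continuous_on_param[OF this] show ?thesis by (simp add: eq)
qed

lemma has_contour_integral_iterated_circlepath:
  fixes K :: "complex \<Rightarrow> complex \<Rightarrow> complex"
  assumes "0 < \<delta>" "0 < r"
    and cont: "continuous_on (sphere 0 \<delta> \<times> sphere p r) (\<lambda>(e,w). K e w)"
    and inner: "\<And>e. e \<in> sphere 0 \<delta> \<Longrightarrow> ((\<lambda>w. K e w) has_contour_integral V e) (circlepath p r)"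
    and outer: "(V has_contour_integral X) (circlepath 0 \<delta>)"
  shows "((\<lambda>w. contour_integral (circlepath 0 \<delta>) (\<lambda>e. K e w)) has_contour_integral X) (circlepath p r)"
proof -
  have "(\<lambda>w. contour_integral (circlepath 0 \<delta>) (\<lambda>e. K e w)) contour_integrable_on circlepath p r"
    using continuous_on_contour_integral_circlepath_param[OF cont] assms(1,2)
    by (intro contour_integrable_continuous_circlepath) auto
  moreover have "contour_integral (circlepath p r) (\<lambda>w. contour_integral (circlepath 0 \<delta>) (\<lambda>e. K e w))
      = contour_integral (circlepath 0 \<delta>) (\<lambda>e. contour_integral (circlepath p r) (\<lambda>w. K e w))"
  proof (rule contour_integral_swap)
    have "continuous_on (sphere p r \<times> sphere 0 \<delta>) ((\<lambda>(e,w). K e w) \<circ> (\<lambda>x. (snd x, fst x)))"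
      by (rule continuous_on_compose[OF _ continuous_on_subset[OF cont]]) (auto intro!: continuous_intros)
    then show "continuous_on (path_image (circlepath p r) \<times> path_image (circlepath 0 \<delta>)) (\<lambda>(y1, y2). K y2 y1)"
      using assms(1,2) by (simp add: o_def case_prod_beta)
  qed (auto intro!: continuous_intros simp: vector_derivative_circlepath)
  moreover have "\<dots> = contour_integral (circlepath 0 \<delta>) V"
    by (rule contour_integral_cong) (use inner assms(1) in \<open>auto intro: contour_integral_unique\<close>)
  moreover have "\<dots> = X"
    using outer by (rule contour_integral_unique)
  ultimately show ?thesis
    by (metis has_contour_integral_integral)
qed

lemma residue_residue_swap:
  fixes K :: "complex \<Rightarrow> complex \<Rightarrow> complex" and R V :: "complex \<Rightarrow> complex"
  assumes "\<rho> > 0"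
    and R_eq: "\<And>w. w \<in> ball p \<rho> - {p} \<Longrightarrow> R w = residue (\<lambda>e. K e w) 0"
    and main: "\<And>r. 0 < r \<Longrightarrow> r < \<rho> \<Longrightarrow> \<exists>\<delta> \<delta>'. 0 < \<delta> \<and> \<delta> < \<delta>' \<and>
        (\<forall>w \<in> sphere p r. (\<lambda>e. K e w) holomorphic_on ball 0 \<delta>' - {0}) \<and>
        continuous_on (sphere 0 \<delta> \<times> sphere p r) (\<lambda>(e,w). K e w) \<and>
        (\<forall>e \<in> sphere 0 \<delta>. ((\<lambda>w. K e w) has_contour_integral 2*pi*\<i>*V e) (circlepath p r)) \<and>
        (V has_contour_integral 2*pi*\<i>*X) (circlepath 0 \<delta>)"
  shows "residue R p = X"
proof (rule residue_eqI[OF \<open>\<rho>>0\<close>])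
  fix r assume r: "0 < r" "r < \<rho>"
  from main[OF r] obtain \<delta> \<delta>' where d: "0 < \<delta>" "\<delta> < \<delta>'"
    and hol: "\<forall>w \<in> sphere p r. (\<lambda>e. K e w) holomorphic_on ball 0 \<delta>' - {0}"
    and cont: "continuous_on (sphere 0 \<delta> \<times> sphere p r) (\<lambda>(e,w). K e w)"
    and inner: "\<forall>e \<in> sphere 0 \<delta>. ((\<lambda>w. K e w) has_contour_integral 2*pi*\<i>*V e) (circlepath p r)"
    and outer: "(V has_contour_integral 2*pi*\<i>*X) (circlepath 0 \<delta>)"
    by blast
  have R_circle: "R w = contour_integral (circlepath 0 \<delta>) (\<lambda>e. K e w) / (2*pi*\<i>)" if "w \<in> sphere p r" for w
  proof -
    have "R w = residue (\<lambda>e. K e w) 0"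
      using that r by (intro R_eq) (auto simp: dist_commute)
    moreover have "((\<lambda>e. K e w) has_contour_integral 2*pi*\<i>*residue (\<lambda>e. K e w) 0) (circlepath 0 \<delta>)"
      by (rule base_residue[of "ball 0 \<delta>'"]) (use d hol that in auto)
    ultimately show ?thesis
      using contour_integral_unique by fastforce
  qed
  have "((\<lambda>w. contour_integral (circlepath 0 \<delta>) (\<lambda>e. K e w)) has_contour_integral 2*pi*\<i> * (2*pi*\<i>*X))
      (circlepath p r)"
    using d r cont inner has_contour_integral_lmul[OF outer, of "2*pi*\<i>"]
    by (intro has_contour_integral_iterated_circlepath[where V = "\<lambda>e. 2*pi*\<i>*V e"]) auto
  then have "((\<lambda>w. contour_integral (circlepath 0 \<delta>) (\<lambda>e. K e w) / (2*pi*\<i>)) has_contour_integral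
      2*pi*\<i> * (2*pi*\<i>*X) / (2*pi*\<i>)) (circlepath p r)"
    by (rule has_contour_integral_div)
  then have "((\<lambda>w. contour_integral (circlepath 0 \<delta>) (\<lambda>e. K e w) / (2*pi*\<i>)) has_contour_integral 2*pi*\<i>*X)
      (circlepath p r)"
    by (simp add: mult_ac)
  then show "(R has_contour_integral 2*pi*\<i>*X) (circlepath p r)"
    by (rule has_contour_integral_eq) (use R_circle r in auto)
qed

lemma has_contour_integral_circlepath_simple_pole:
  assumes "g holomorphic_on cball p r" "0 < r" "q \<notin> sphere p r"
  shows "((\<lambda>w. g w / (w - q)) has_contour_integral (if q \<in> ball p r then 2 * pi * \<i> * g q else 0))
           (circlepath p r)"
proof (cases "q \<in> ball p r")
  case True
  then have "((\<lambda>w. g w / (w - q)) has_contour_integral 2 * of_real pi * \<i> * g q) (circlepath p r)"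
    using assms(1) by (intro Cauchy_integral_circlepath_simple) (auto simp: dist_norm norm_minus_commute)
  then show ?thesis using True by simp
next
  case False
  with assms(3) have "q \<notin> cball p r" by auto
  then have "((\<lambda>w. g w / (w - q)) has_contour_integral 0) (circlepath p r)"
    using assms(1,2) by (intro Cauchy_theorem_convex_simple[of _ "cball p r"] holomorphic_intros) auto
  then show ?thesis using False by simp
qed

lemma continuous_on_Times_simple_pole:
  fixes T a G :: "complex \<Rightarrow> complex"
  assumes "continuous_on A T" "continuous_on A a" "continuous_on B G"
    and "\<And>e w. e \<in> A \<Longrightarrow> w \<in> B \<Longrightarrow> a e * w - c \<noteq> 0"
  shows "continuous_on (A \<times> B) (\<lambda>(e, w). T e * G w / (a e * w - c))"
proof -
  have cT: "continuous_on (A \<times> B) (\<lambda>x. T (fst x))"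
    by (rule continuous_on_compose2[OF assms(1) continuous_on_fst]) auto
  have ca: "continuous_on (A \<times> B) (\<lambda>x. a (fst x))"
    by (rule continuous_on_compose2[OF assms(2) continuous_on_fst]) auto
  have cG: "continuous_on (A \<times> B) (\<lambda>x. G (snd x))"
    by (rule continuous_on_compose2[OF assms(3) continuous_on_snd]) auto
  have "continuous_on (A \<times> B) (\<lambda>x. T (fst x) * G (snd x) / (a (fst x) * snd x - c))"
    by (intro continuous_intros cT cG ca) (use assms(4) in auto)
  then show ?thesis by (simp add: case_prod_beta)
qed

lemma pole_separated_near_0:
  fixes q :: "complex \<Rightarrow> complex"
  assumes "isCont q 0" "q 0 = p \<or> r < dist (q 0) p" "0 < r"
  obtains \<eta> where "\<eta> > 0"
    "\<And>e. norm e < \<eta> \<Longrightarrow> (q e \<in> ball p r \<longleftrightarrow> q 0 = p) \<and> q e \<notin> sphere p r"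
proof -
  define s where "s = (if q 0 = p then r else dist (q 0) p - r)"
  have "s > 0" using assms(2,3) by (auto simp: s_def)
  then obtain \<eta> where "\<eta> > 0" and \<eta>: "\<And>e. norm e < \<eta> \<Longrightarrow> dist (q e) (q 0) < s"
    using assms(1) unfolding continuous_at_eps_delta by (force simp: dist_norm)
  have "(q e \<in> ball p r \<longleftrightarrow> q 0 = p) \<and> q e \<notin> sphere p r" if "norm e < \<eta>" for e
  proof (cases "q 0 = p")
    case False
    then show ?thesis
      using \<eta>[OF that] dist_triangle[of "q 0" p "q e"] by (auto simp: s_def dist_commute)
  qed (use \<eta>[OF that] in \<open>auto simp: s_def dist_commute\<close>)
  with \<open>\<eta> > 0\<close> show ?thesis using that by blast
qed

(* For fixed e, the function T e * G w / (a e * w - c) has the single pole w = c / a e; the small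
   circles around p enclose it for all small e exactly when c / a 0 = p. *)
lemma residue_residue_simple_pole:
  fixes T a G R :: "complex \<Rightarrow> complex"
  assumes "\<epsilon> > 0" "\<rho> > 0"
    and T: "T holomorphic_on ball 0 \<epsilon> - {0}"
    and a: "a holomorphic_on ball 0 \<epsilon>" "\<And>e. e \<in> ball 0 \<epsilon> \<Longrightarrow> a e \<noteq> 0"
    and G: "G holomorphic_on ball p \<rho>"
    and R: "\<And>w. w \<in> ball p \<rho> - {p} \<Longrightarrow> R w = residue (\<lambda>e. T e * G w / (a e * w - c)) 0"
  shows "residue R p = (if c / a 0 = p then residue (\<lambda>e. T e * G (c / a e) / a e) 0 else 0)"
proof -
  define q where "q e = c / a e" for e
  define V where "V e = (if q 0 = p then T e / a e * G (q e) else 0)" for e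
  define \<rho>' where "\<rho>' = (if q 0 = p then \<rho> else min \<rho> (dist (q 0) p))"
  have "\<rho>' > 0" "\<rho>' \<le> \<rho>" using \<open>\<rho> > 0\<close> by (auto simp: \<rho>'_def)
  have q_hol: "q holomorphic_on ball 0 \<epsilon>"
    unfolding q_def using a by (intro holomorphic_intros) auto
  have "isCont q 0"
    using q_hol \<open>\<epsilon> > 0\<close> by (intro continuous_on_interior[of "ball 0 \<epsilon>"] holomorphic_on_imp_continuous_on) auto
  have factor: "a e * w - c = a e * (w - q e)" if "e \<in> ball 0 \<epsilon>" for e w
    using a(2)[OF that] by (simp add: q_def algebra_simps)
  show ?thesis
  proof (rule residue_residue_swap[OF \<open>\<rho>' > 0\<close>, where K = "\<lambda>e w. T e * G w / (a e * w - c)" and V = V])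
    show "R w = residue (\<lambda>e. T e * G w / (a e * w - c)) 0" if "w \<in> ball p \<rho>' - {p}" for w
      using R that \<open>\<rho>' \<le> \<rho>\<close> by auto
  next
    fix r assume r: "0 < r" "r < \<rho>'"
    have "q 0 = p \<or> r < dist (q 0) p" using r by (auto simp: \<rho>'_def split: if_splits)
    then obtain \<eta> where "\<eta> > 0" and pole:
      "\<And>e. norm e < \<eta> \<Longrightarrow> (q e \<in> ball p r \<longleftrightarrow> q 0 = p) \<and> q e \<notin> sphere p r"
      using pole_separated_near_0[OF \<open>isCont q 0\<close> _ \<open>0 < r\<close>] by blast
    define \<delta>' where "\<delta>' = min \<eta> \<epsilon>"
    define \<delta> where "\<delta> = \<delta>' / 2"
    have "0 < \<delta>" "\<delta> < \<delta>'" "\<delta>' \<le> \<epsilon>" using \<open>\<eta> > 0\<close> \<open>\<epsilon> > 0\<close> by (auto simp: \<delta>_def \<delta>'_def)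
    have r_sub: "cball p r \<subseteq> ball p \<rho>" using r \<open>\<rho>' \<le> \<rho>\<close> by auto
    have pole': "(q e \<in> ball p r \<longleftrightarrow> q 0 = p) \<and> q e \<notin> sphere p r" if "norm e < \<delta>'" for e
      using pole[of e] that by (simp add: \<delta>'_def)
    have hol_denom: "a e * w - c \<noteq> 0" if "w \<in> sphere p r" "e \<in> ball 0 \<delta>'" for e w
      using that pole'[of e] factor[of e w] a(2)[of e] \<open>\<delta>' \<le> \<epsilon>\<close> by auto
    have hol_e: "(\<lambda>e. T e * G w / (a e * w - c)) holomorphic_on ball 0 \<delta>' - {0}" if "w \<in> sphere p r" for w
      using hol_denom[OF that] \<open>\<delta>' \<le> \<epsilon>\<close>
      by (intro holomorphic_intros holomorphic_on_subset[OF T] holomorphic_on_subset[OF a(1)]) auto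
    have V_hol: "V holomorphic_on ball 0 \<delta>' - {0}"
    proof (cases "q 0 = p")
      case True
      have "q e \<in> ball p \<rho>" if "e \<in> ball 0 \<delta>'" for e
        using pole'[of e] True that r \<open>\<rho>' \<le> \<rho>\<close> by simp
      then have "(G \<circ> q) holomorphic_on ball 0 \<delta>'"
        using \<open>\<delta>' \<le> \<epsilon>\<close> by (intro holomorphic_on_compose_gen[OF _ G] holomorphic_on_subset[OF q_hol]) auto
      then show ?thesis
        unfolding V_def using True a(2) \<open>\<delta>' \<le> \<epsilon>\<close>
        by (auto simp: o_def intro!: holomorphic_intros holomorphic_on_subset[OF T] holomorphic_on_subset[OF a(1)])
    next
      case False
      then have "V = (\<lambda>_. 0)" by (simp add: V_def fun_eq_iff)
      then show ?thesis by simp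
    qed
    show "\<exists>\<delta> \<delta>'. 0 < \<delta> \<and> \<delta> < \<delta>' \<and>
        (\<forall>w\<in>sphere p r. (\<lambda>e. T e * G w / (a e * w - c)) holomorphic_on ball 0 \<delta>' - {0}) \<and>
        continuous_on (sphere 0 \<delta> \<times> sphere p r) (\<lambda>(e, w). T e * G w / (a e * w - c)) \<and>
        (\<forall>e\<in>sphere 0 \<delta>. ((\<lambda>w. T e * G w / (a e * w - c)) has_contour_integral 2 * pi * \<i> * V e) (circlepath p r)) \<and>
        (V has_contour_integral 2 * pi * \<i> * (if c / a 0 = p then residue (\<lambda>e. T e * G (c / a e) / a e) 0 else 0)) (circlepath 0 \<delta>)"
    proof (intro exI conjI ballI)
      show "0 < \<delta>" "\<delta> < \<delta>'" by fact+
      show "(\<lambda>e. T e * G w / (a e * w - c)) holomorphic_on ball 0 \<delta>' - {0}" if "w \<in> sphere p r" for w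
        using hol_e that by blast
    next
      show "continuous_on (sphere 0 \<delta> \<times> sphere p r) (\<lambda>(e, w). T e * G w / (a e * w - c))"
      proof (rule continuous_on_Times_simple_pole)
        have "sphere 0 \<delta> \<subseteq> ball 0 \<epsilon> - {0}" using \<open>0 < \<delta>\<close> \<open>\<delta> < \<delta>'\<close> \<open>\<delta>' \<le> \<epsilon>\<close> by auto
        then show "continuous_on (sphere 0 \<delta>) T" "continuous_on (sphere 0 \<delta>) a"
          by (auto intro!: holomorphic_on_imp_continuous_on holomorphic_on_subset[OF T] holomorphic_on_subset[OF a(1)])
        show "continuous_on (sphere p r) G"
          using r_sub by (auto intro!: holomorphic_on_imp_continuous_on holomorphic_on_subset[OF G])
        show "a e * w - c \<noteq> 0" if "e \<in> sphere 0 \<delta>" "w \<in> sphere p r" for e w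
          using \<open>\<delta> < \<delta>'\<close> hol_denom[OF that(2)] that(1) by auto
      qed
    next
      fix e :: complex assume e: "e \<in> sphere 0 \<delta>"
      then have "norm e < \<delta>'" "e \<in> ball 0 \<epsilon>" using \<open>\<delta> < \<delta>'\<close> \<open>\<delta>' \<le> \<epsilon>\<close> by auto
      have "G holomorphic_on cball p r" using r_sub by (rule holomorphic_on_subset[OF G])
      have K_eq: "T e * G w / (a e * w - c) = (T e / a e * G w) / (w - q e)" for w
        using factor[OF \<open>e \<in> ball 0 \<epsilon>\<close>] by simp
      have "((\<lambda>w. (T e / a e * G w) / (w - q e)) has_contour_integral
          (if q e \<in> ball p r then 2 * pi * \<i> * (T e / a e * G (q e)) else 0)) (circlepath p r)"
        using \<open>G holomorphic_on cball p r\<close> r pole'[OF \<open>norm e < \<delta>'\<close>]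
        by (intro has_contour_integral_circlepath_simple_pole holomorphic_intros) auto
      moreover have "q e \<in> ball p r \<longleftrightarrow> q 0 = p"
        using pole'[OF \<open>norm e < \<delta>'\<close>] by blast
      ultimately show "((\<lambda>w. T e * G w / (a e * w - c)) has_contour_integral 2 * pi * \<i> * V e) (circlepath p r)"
        unfolding K_eq V_def by (cases "q 0 = p") simp_all
    next
      have "(V has_contour_integral 2 * pi * \<i> * residue V 0) (circlepath 0 \<delta>)"
        using V_hol \<open>0 < \<delta>\<close> \<open>\<delta> < \<delta>'\<close> by (intro base_residue[of "ball 0 \<delta>'"]) auto
      moreover have "V = (if q 0 = p then (\<lambda>e. T e * G (c / a e) / a e) else (\<lambda>_. 0))"
        by (simp add: V_def q_def fun_eq_iff)
      ultimately show "(V has_contour_integral 2 * pi * \<i> * (if c / a 0 = p then residue (\<lambda>e. T e * G (c / a e) / a e) 0 else 0)) (circlepath 0 \<delta>)"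
        by (cases "q 0 = p") (simp_all add: q_def has_contour_integral_0)
    qed
  qed
qed

lemma norm_one_plus_ge:
  fixes e :: complex
  shows "norm e \<le> 1/2 \<Longrightarrow> norm (1 + e) \<ge> 1/2"
  using norm_triangle_ineq2[of 1 "-e"] by (simp add: algebra_simps)

lemma winding_number_moebius_circlepath:
  fixes c :: complex
  assumes "c \<noteq> 0" "0 < \<delta>" "\<delta> \<le> 1/4"
  shows "winding_number ((\<lambda>e. c * e / (1 + e)) \<circ> circlepath 0 \<delta>) 0 = 1"
proof -
  define \<phi> where "\<phi> e = c * e / (1 + e)" for e :: complex
  define \<gamma> where "\<gamma> = circlepath 0 \<delta>"
  have nz: "1 + e \<noteq> 0" if "e \<in> ball 0 (1/2)" for e :: complex
    using norm_one_plus_ge[of e] that by auto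
  have "\<phi> holomorphic_on ball 0 (1/2)"
    unfolding \<phi>_def using nz by (intro holomorphic_intros) auto
  then have ana: "\<phi> analytic_on ball 0 (1/2)"
    by (simp add: analytic_on_open)
  have pig: "path_image \<gamma> \<subseteq> ball 0 (1/2)" "0 \<notin> path_image \<gamma>"
    using assms by (auto simp: \<gamma>_def)
  have vp: "valid_path (\<phi> \<circ> \<gamma>)"
    using pig by (intro valid_path_compose_analytic[OF _ ana]) (auto simp: \<gamma>_def)
  have "0 \<notin> path_image (\<phi> \<circ> \<gamma>)"
    using pig assms(1) nz by (auto simp: path_image_compose \<phi>_def)
  then have "winding_number (\<phi> \<circ> \<gamma>) 0 = 1/(2*pi*\<i>) * contour_integral (\<phi> \<circ> \<gamma>) (\<lambda>w. 1/(w - 0))"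
    by (rule winding_number_valid_path[OF vp])
  also have "contour_integral (\<phi> \<circ> \<gamma>) (\<lambda>w. 1/(w - 0)) = contour_integral \<gamma> (\<lambda>w. deriv \<phi> w * (1/(\<phi> w - 0)))"
    using pig by (intro contour_integral_comp_analyticW[OF ana]) (auto simp: \<gamma>_def)
  also have "\<dots> = contour_integral \<gamma> (\<lambda>w. 1/w - 1/(1+w))"
  proof (rule contour_integral_cong)
    fix w assume w: "w \<in> path_image \<gamma>"
    then have "w \<noteq> 0" "1 + w \<noteq> 0" using pig nz by auto
    moreover have "(\<phi> has_field_derivative c/(1+w)^2) (at w)"
      unfolding \<phi>_def using \<open>1 + w \<noteq> 0\<close>
      by (auto intro!: derivative_eq_intros simp: field_simps power2_eq_square)
    ultimately show "deriv \<phi> w * (1 / (\<phi> w - 0)) = 1 / w - 1 / (1 + w)"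
      using assms(1) by (simp add: DERIV_imp_deriv \<phi>_def divide_simps) (simp add: algebra_simps power2_eq_square)
  qed simp
  also have "\<dots> = 2*pi*\<i> - 0"
  proof (rule contour_integral_unique, rule has_contour_integral_diff)
    show "((\<lambda>w. 1/w) has_contour_integral 2*pi*\<i>) \<gamma>"
      unfolding \<gamma>_def using assms Cauchy_integral_circlepath_simple[of "\<lambda>_. 1" 0 \<delta> 0] by simp
    show "((\<lambda>w. 1/(1+w)) has_contour_integral 0) \<gamma>"
      using pig nz assms
      by (intro Cauchy_theorem_convex_simple[of _ "ball 0 (1/2)"]) (auto intro!: holomorphic_intros simp: \<gamma>_def)
  qed
  finally have "winding_number (\<phi> \<circ> \<gamma>) 0 = 1" by (simp add: o_def)
  then show ?thesis unfolding \<phi>_def[abs_def] \<gamma>_def .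
qed

lemma residue_moebius_substitution:
  fixes f :: "complex \<Rightarrow> complex" and c :: complex
  assumes holf: "f holomorphic_on ball 0 R - {0}" and "R > 0" and "c \<noteq> 0"
  shows "residue f 0 = residue (\<lambda>e. f (c*e/(1+e)) * (c/(1+e)^2)) 0"
proof -
  define \<phi> where "\<phi> e = c * e / (1 + e)" for e :: complex
  define g where "g e = f (\<phi> e) * (c/(1+e)^2)" for e
  define \<rho> where "\<rho> = R / (norm c + 1)"
  have "\<rho> > 0" "norm c * \<rho> < R"
    using assms by (simp_all add: \<rho>_def add_nonneg_pos field_simps)
  define \<delta> where "\<delta> = min (1/4) (\<rho> / 4)"
  have \<delta>: "\<delta> > 0" "\<delta> \<le> 1/4" "4 * \<delta> \<le> \<rho>"
    using \<open>\<rho> > 0\<close> by (auto simp: \<delta>_def)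
  define \<gamma> where "\<gamma> = circlepath 0 \<delta>"
  have nz: "1 + e \<noteq> 0" if "norm e \<le> 1/2" for e :: complex
    using norm_one_plus_ge[OF that] by auto
  have \<phi>_small: "\<phi> e \<in> ball 0 R - {0}" if "e \<noteq> 0" "norm e \<le> 2*\<delta>" for e
  proof -
    have "norm (\<phi> e) \<le> norm c * norm e / (1/2)"
      using norm_one_plus_ge[of e] that \<delta> unfolding \<phi>_def norm_mult norm_divide
      by (intro divide_left_mono mult_nonneg_nonneg) auto
    also have "\<dots> \<le> norm c * (4 * \<delta>)"
      using mult_left_mono[OF that(2) norm_ge_zero[of c]] by (simp add: mult_ac)
    also have "\<dots> \<le> norm c * \<rho>"
      using \<delta>(3) by (intro mult_left_mono) auto
    also have "\<dots> < R" by fact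
    finally show ?thesis using that nz[of e] \<delta> assms(3) by (auto simp: \<phi>_def)
  qed
  have hol_\<phi>: "\<phi> holomorphic_on ball 0 (1/2)"
    unfolding \<phi>_def using nz by (intro holomorphic_intros) auto
  have hol_g: "g holomorphic_on ball 0 (2*\<delta>) - {0}"
  proof -
    have "(f \<circ> \<phi>) holomorphic_on ball 0 (2*\<delta>) - {0}"
      using \<phi>_small \<delta> by (intro holomorphic_on_compose_gen[OF holomorphic_on_subset[OF hol_\<phi>] holf]) auto
    then show ?thesis
      unfolding g_def o_def using \<delta> nz by (intro holomorphic_intros) auto
  qed
  have pig: "path_image \<gamma> = sphere 0 \<delta>" using \<delta> by (simp add: \<gamma>_def)
  have ana: "\<phi> analytic_on ball 0 (1/2)"
    using hol_\<phi> by (simp add: analytic_on_open)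
  have vp: "valid_path (\<phi> \<circ> \<gamma>)"
    using \<delta> by (intro valid_path_compose_analytic[OF _ ana]) (auto simp: \<gamma>_def)
  have loop: "pathfinish (\<phi> \<circ> \<gamma>) = pathstart (\<phi> \<circ> \<gamma>)"
    by (simp add: pathfinish_compose pathstart_compose \<gamma>_def)
  have pimg: "path_image (\<phi> \<circ> \<gamma>) \<subseteq> ball 0 R - {0}"
    using \<phi>_small \<delta> by (auto simp: path_image_compose pig)
  have "winding_number (\<phi> \<circ> \<gamma>) 0 = 1"
    unfolding \<phi>_def[abs_def] \<gamma>_def using assms(3) \<delta>(1,2) by (rule winding_number_moebius_circlepath)
  moreover have "contour_integral (\<phi> \<circ> \<gamma>) f = 2*pi*\<i> * (\<Sum>p\<in>{0}. winding_number (\<phi> \<circ> \<gamma>) p * residue f p)"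
  proof (rule Residue_theorem[of "ball 0 R"])
    show "\<forall>z. z \<notin> ball 0 R \<longrightarrow> winding_number (\<phi> \<circ> \<gamma>) z = 0"
      using pimg vp loop by (auto intro!: winding_number_zero_outside[of _ "ball 0 R"] valid_path_imp_path)
  qed (use assms vp loop pimg in auto)
  moreover have "contour_integral (\<phi> \<circ> \<gamma>) f = contour_integral \<gamma> (\<lambda>w. deriv \<phi> w * f (\<phi> w))"
    using \<delta> pig by (intro contour_integral_comp_analyticW[OF ana]) (auto simp: \<gamma>_def)
  moreover have "\<dots> = contour_integral \<gamma> g"
  proof (rule contour_integral_cong)
    fix w assume "w \<in> path_image \<gamma>"
    then have "norm w \<le> 1/2" using \<delta> pig by auto
    then have "(\<phi> has_field_derivative c/(1+w)^2) (at w)"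
      unfolding \<phi>_def using nz by (auto intro!: derivative_eq_intros simp: field_simps power2_eq_square)
    then show "deriv \<phi> w * f (\<phi> w) = g w" by (simp add: DERIV_imp_deriv g_def)
  qed simp
  moreover have "contour_integral \<gamma> g = 2*pi*\<i>*residue g 0"
    unfolding \<gamma>_def using \<delta> hol_g by (intro contour_integral_unique base_residue[of "ball 0 (2*\<delta>)"]) auto
  ultimately have "residue f 0 = residue g 0" by simp
  then show ?thesis by (simp add: g_def[abs_def] \<phi>_def)
qed

lemma higher_deriv_of_real:
  fixes g :: "complex \<Rightarrow> complex" and f :: "real \<Rightarrow> real"
  assumes hol: "g holomorphic_on ball 0 \<rho>"
    and eq: "\<And>x. \<bar>x\<bar> < \<rho> \<Longrightarrow> g (of_real x) = of_real (f x)"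
  shows "\<bar>x\<bar> < \<rho> \<Longrightarrow> (deriv ^^ n) g (of_real x) = of_real ((deriv ^^ n) f x)"
proof (induction n arbitrary: x)
  case 0 thus ?case using eq by simp
next
  case (Suc n x)
  define h where "h = (deriv ^^ n) g"
  define F where "F = (deriv ^^ n) f"
  have IH: "\<And>y. \<bar>y\<bar> < \<rho> \<Longrightarrow> h (of_real y) = of_real (F y)" using Suc.IH by (simp add: h_def F_def)
  have holh: "h holomorphic_on ball 0 \<rho>" unfolding h_def by (intro holomorphic_higher_deriv hol) auto
  have xin: "of_real x \<in> ball (0::complex) \<rho>" using Suc.prems by simp
  define D where "D = deriv h (of_real x)"
  have hd: "(h has_field_derivative D) (at (of_real x))"
    unfolding D_def by (rule holomorphic_derivI[OF holh _ xin]) auto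
  have hv: "((\<lambda>t. h (of_real t)) has_vector_derivative D) (at x)"
    by (rule has_vector_derivative_real_field[OF hd])
  have hRe: "((\<lambda>t. Re (h (of_real t))) has_real_derivative Re D) (at x)"
  proof -
    have "((\<lambda>t. Re (h (of_real t))) has_derivative (\<lambda>u. Re (u *\<^sub>R D))) (at x)"
      using hv unfolding has_vector_derivative_def by (rule has_derivative_Re)
    moreover have "(\<lambda>u. Re (u *\<^sub>R D)) = (*) (Re D)" by (auto simp: fun_eq_iff)
    ultimately show ?thesis unfolding has_field_derivative_def by simp
  qed
  have hIm: "((\<lambda>t. Im (h (of_real t))) has_real_derivative Im D) (at x)"
  proof -
    have "((\<lambda>t. Im (h (of_real t))) has_derivative (\<lambda>u. Im (u *\<^sub>R D))) (at x)"
      using hv unfolding has_vector_derivative_def by (rule has_derivative_Im)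
    moreover have "(\<lambda>u. Im (u *\<^sub>R D)) = (*) (Im D)" by (auto simp: fun_eq_iff)
    ultimately show ?thesis unfolding has_field_derivative_def by simp
  qed
  have opn: "open {-\<rho><..<\<rho>}" by simp
  have xo: "x \<in> {-\<rho><..<\<rho>}" using Suc.prems by auto
  have FD: "(F has_real_derivative Re D) (at x)"
    by (rule has_field_derivative_transform_within_open[OF hRe opn xo]) (use IH in auto)
  have zD: "((\<lambda>t. 0) has_real_derivative Im D) (at x)"
    by (rule has_field_derivative_transform_within_open[OF hIm opn xo]) (use IH in auto)
  have "Im D = 0" using DERIV_unique[OF zD DERIV_const] .
  hence Dre: "D = of_real (Re D)" by (simp add: complex_eq_iff)
  have "(deriv ^^ Suc n) g (of_real x) = D" by (simp add: D_def h_def)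
  also have "\<dots> = of_real (deriv F x)" using Dre DERIV_imp_deriv[OF FD] by simp
  also have "deriv F x = (deriv ^^ Suc n) f x" by (simp add: F_def)
  finally show ?case .
qed

section \<open>The residue points\<close>

lemma inverse_two_minus_ratio:
  "1 / (2 - of_nat t / of_nat (Suc t)) = (of_nat (Suc t) / of_nat (Suc (Suc t)) :: complex)"
proof -
  have "(of_nat (Suc t) :: complex) \<noteq> 0" "(of_nat (Suc (Suc t)) :: complex) \<noteq> 0"
    by (simp_all only: of_nat_eq_0_iff)
  then show ?thesis by (simp add: field_simps)
qed

lemma coef_set_eq: "coef_set i = (\<lambda>t. of_nat t / of_nat (Suc t)) ` {..i}"
proof (induction i)
  case (Suc i)
  then have "(\<lambda>a. 1 / (2 - a)) ` coef_set i = (\<lambda>t. of_nat t / of_nat (Suc t)) ` Suc ` {..i}"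
    by (simp only: image_image inverse_two_minus_ratio)
  then show ?case by (simp add: atMost_Suc_eq_insert_0)
qed simp

lemma res_points_eq:
  assumes "i < d"
  shows "res_points d i z = (\<lambda>t. of_nat t / of_nat (Suc t) * z (Suc i)) ` {..i}"
proof (cases i)
  case (Suc i')
  have "z (Suc i) / (2 - of_nat t / of_nat (Suc t)) = of_nat (Suc t) / of_nat (Suc (Suc t)) * z (Suc i)" for t
    by (simp only: inverse_two_minus_ratio[symmetric]) simp
  then have "(\<lambda>a. z (Suc i) / (2 - a)) ` coef_set i' = (\<lambda>t. of_nat t / of_nat (Suc t) * z (Suc i)) ` Suc ` {..i'}"
    by (simp only: coef_set_eq image_image)
  then show ?thesis
    using assms Suc by (simp add: res_points_def atMost_Suc_eq_insert_0)
qed (simp add: res_points_def)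

section \<open>The kernels\<close>

lemma add_of_nat_neq_0:
  fixes e :: complex
  assumes "norm e < 1" "0 < l"
  shows "e + of_nat l \<noteq> 0"
proof
  assume "e + of_nat l = 0"
  then have "norm e = of_nat l" by (simp add: eq_neg_iff_add_eq_0[symmetric] norm_of_nat)
  with assms show False by simp
qed

lemma prod_lessThan_reflect:
  fixes M k :: nat
  shows "(\<Prod>t<k. f (M + k - t)) = (\<Prod>r\<in>{M<..M + k}. f r)"
  by (rule prod.reindex_bij_witness[of _ "\<lambda>r. M + k - r" "\<lambda>t. M + k - t"]) auto

lemma inverse_power_mult_power_int:
  fixes x :: complex
  assumes "x \<noteq> 0"
  shows "1 / x ^ N * x powi (int N - 2 - int j) * x = 1 / x ^ (j+1)"
proof -
  have "x powi (int N - 2 - int j) = x powi (int N - int (j+2))" by (simp add: algebra_simps)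
  also have "\<dots> = x powi int N / x powi int (j+2)" by (rule power_int_diff) (use assms in simp)
  also have "\<dots> = x ^ N / x ^ (j+2)" by (simp only: power_int_of_nat)
  finally show ?thesis using assms by (simp add: field_simps)
qed

locale iterated_residue =
  fixes N k d j :: nat
  assumes N_ge_2: "2 \<le> N" and N_le_k: "N \<le> k" and d_ge_1: "1 \<le> d"
begin

(* kernel i is the kernel K_i described at the top, gen_fun d is Phi, and tail_factor s z collects
   the factors of the integrand that involve only z_s, ..., z_d. *)

definition m :: nat where
  "m = 1 + (k - N) * d"

definition ek_tail :: "complex \<Rightarrow> complex \<Rightarrow> complex" where
  "ek_tail x y = (\<Prod>t<k. of_nat t * x + of_nat (k - t) * y)"

definition pole_coef :: "nat \<Rightarrow> complex \<Rightarrow> complex" where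
  "pole_coef i e = (e + of_nat i) / (e + of_nat i + 1)"

definition inv_pole_coef :: "nat \<Rightarrow> complex \<Rightarrow> complex" where
  "inv_pole_coef i e = (e + of_nat i + 2) / (e + of_nat i + 1)"

definition gen_fun :: "nat \<Rightarrow> complex \<Rightarrow> complex" where
  "gen_fun n e = (\<Prod>r=1..k*n. of_nat r + of_nat k * e) / (\<Prod>r=1..n. (of_nat r + e) ^ N)"

definition kernel_exp :: "nat \<Rightarrow> nat" where
  "kernel_exp i = (i + 1) * (k - N)"

definition kernel_coef :: "nat \<Rightarrow> complex \<Rightarrow> complex" where
  "kernel_coef i e = of_nat k * gen_fun (i+1) e * (of_nat d + e) ^ m / (e + of_nat (i+1)) ^ (kernel_exp i + 1)"

definition diag_factor :: "nat \<Rightarrow> (nat \<Rightarrow> complex) \<Rightarrow> complex" where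
  "diag_factor l z = 1 / (of_nat k * z l * (2 * z l - z (l - 1) - z (l + 1)))"

definition tail_factor :: "nat \<Rightarrow> (nat \<Rightarrow> complex) \<Rightarrow> complex" where
  "tail_factor s z = (\<Prod>l=s..d. 1 / (z l) ^ N) * (\<Prod>l=Suc s..d. ek k (z (l - 1)) (z l))
      * (\<Prod>l=Suc s..d-1. diag_factor l z) * (1 / (z d) ^ m)"

definition tail_factor_at :: "nat \<Rightarrow> complex \<Rightarrow> (nat \<Rightarrow> complex) \<Rightarrow> complex" where
  "tail_factor_at i w z = (if i + 3 \<le> d then 1 / (of_nat k * z (i+2) * (2 * z (i+2) - w - z (i+3))) else 1)
      * tail_factor (i+2) z"

definition kernel_num :: "nat \<Rightarrow> complex \<Rightarrow> (nat \<Rightarrow> complex) \<Rightarrow> complex" where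
  "kernel_num i w z = w ^ kernel_exp i * ek_tail w (z (i+2)) * tail_factor_at i w z"

definition kernel :: "nat \<Rightarrow> complex \<Rightarrow> (nat \<Rightarrow> complex) \<Rightarrow> complex" where
  "kernel i e z = (if i + 2 \<le> d
     then kernel_coef i e / e ^ (j+1) * kernel_num i (z (i+1)) z / (inv_pole_coef i e * z (i+1) - z (i+2))
     else of_nat k * gen_fun d e / e ^ (j+1) / z d)"

lemma k_neq_0: "(of_nat k :: complex) \<noteq> 0"
  using N_ge_2 N_le_k by auto

lemma ek_eq_ek_tail: "ek k x y = of_nat k * x * ek_tail x y"
proof -
  have "ek k x y = (\<Prod>i<Suc k. of_nat i * x + of_nat (k - i) * y)"
    unfolding ek_def by (simp add: atLeast0AtMost lessThan_Suc_atMost)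
  also have "\<dots> = (\<Prod>i<k. of_nat i * x + of_nat (k - i) * y) * (of_nat k * x)"
    by (subst prod.lessThan_Suc) simp
  finally show ?thesis by (simp add: ek_tail_def mult_ac)
qed

lemma ek_tail_homogeneous: "ek_tail (c * x) x = x ^ k * ek_tail c 1"
proof -
  have "ek_tail (c * x) x = (\<Prod>t<k. x * (of_nat t * c + of_nat (k - t) * 1))"
    unfolding ek_tail_def by (intro prod.cong refl) (simp add: algebra_simps)
  also have "\<dots> = (\<Prod>t<k. x) * (\<Prod>t<k. of_nat t * c + of_nat (k - t) * 1)"
    by (rule prod.distrib)
  finally show ?thesis by (simp add: ek_tail_def)
qed

lemma ek_tail_pole_coef:
  assumes "e + of_nat (Suc i) \<noteq> 0"
  shows "ek_tail (pole_coef i e) 1 = (\<Prod>r\<in>{k*i<..k*Suc i}. of_nat r + of_nat k * e) / (e + of_nat (Suc i)) ^ k"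
proof -
  define B where "B = e + of_nat (Suc i)"
  have "B \<noteq> 0" using assms by (simp add: B_def)
  have "of_nat t * pole_coef i e + of_nat (k - t) * 1 = (of_nat (k*i + k - t) + of_nat k * e) / B" if "t < k" for t
  proof -
    have X: "of_nat (k*i + k - t) = (of_nat k * of_nat i + of_nat k - of_nat t :: complex)"
      and Y: "of_nat (k - t) = (of_nat k - of_nat t :: complex)"
      using that by (simp_all add: of_nat_diff algebra_simps)
    have C: "pole_coef i e = (B - 1) / B" unfolding pole_coef_def B_def by (simp add: algebra_simps)
    have E: "e = B - of_nat i - 1" by (simp add: B_def)
    have "of_nat t * ((B - 1) / B) + (of_nat k - of_nat t) * 1 =
        (of_nat k * of_nat i + of_nat k - of_nat t + of_nat k * (B - of_nat i - 1)) / B"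
      using \<open>B \<noteq> 0\<close> by (simp add: field_simps)
    then show ?thesis unfolding C X Y by (simp add: E)
  qed
  then have "ek_tail (pole_coef i e) 1 = (\<Prod>t<k. of_nat (k*i + k - t) + of_nat k * e) / B ^ k"
    unfolding ek_tail_def by (simp add: prod_dividef)
  also have "(\<Prod>t<k. of_nat (k*i + k - t) + of_nat k * e) = (\<Prod>r\<in>{k*i<..k*i + k}. of_nat r + of_nat k * e)"
    by (rule prod_lessThan_reflect)
  finally show ?thesis by (simp add: B_def algebra_simps)
qed

lemma gen_fun_Suc:
  "gen_fun (Suc n) e = gen_fun n e * (\<Prod>r\<in>{k*n<..k*Suc n}. of_nat r + of_nat k * e) / (of_nat (Suc n) + e) ^ N"
proof -
  have "{1..k*Suc n} = {1..k*n} \<union> {k*n<..k*Suc n}" by auto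
  then have "(\<Prod>r=1..k*Suc n. of_nat r + of_nat k * e) =
        (\<Prod>r=1..k*n. of_nat r + of_nat k * e) * (\<Prod>r\<in>{k*n<..k*Suc n}. of_nat r + (of_nat k * e :: complex))"
    by (simp only:) (rule prod.union_disjoint, auto)
  moreover have "(\<Prod>r=1..Suc n. (of_nat r + e) ^ N) = (\<Prod>r=1..n. (of_nat r + e) ^ N) * (of_nat (Suc n) + e) ^ N"
    by (simp add: prod.cl_ivl_Suc)
  ultimately show ?thesis unfolding gen_fun_def by (simp add: field_simps)
qed

lemma kernel_exp_Suc: "kernel_exp (Suc i) + N = kernel_exp i + k"
  using N_le_k unfolding kernel_exp_def by (simp add: algebra_simps)

lemma kernel_coef_Suc:
  assumes "norm e < 1/2"
  shows "kernel_coef (Suc i) e = kernel_coef i e * pole_coef (Suc i) e ^ kernel_exp i * ek_tail (pole_coef (Suc i) e) 1 / inv_pole_coef i e"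
proof -
  define P where "P = (\<Prod>r\<in>{k*Suc i<..k*Suc (Suc i)}. of_nat r + of_nat k * (e::complex))"
  define a where "a = e + of_nat (i+1)"
  define b where "b = e + of_nat (i+2)"
  have "a \<noteq> 0" "b \<noteq> 0"
    using add_of_nat_neq_0[of e "i+1"] add_of_nat_neq_0[of e "i+2"] assms by (simp_all only: a_def b_def) simp_all
  have c: "pole_coef (Suc i) e = a / b" and inv: "inv_pole_coef i e = b / a"
    by (simp_all add: pole_coef_def inv_pole_coef_def a_def b_def algebra_simps)
  have q: "ek_tail (a / b) 1 = P / b ^ k"
    using ek_tail_pole_coef[of e "Suc i"] \<open>b \<noteq> 0\<close> unfolding c[symmetric] by (simp add: P_def b_def add.assoc)
  have ph: "gen_fun (Suc (Suc i)) e = gen_fun (Suc i) e * P / b ^ N"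
    unfolding gen_fun_Suc[of "Suc i"] P_def b_def by (simp add: algebra_simps)
  have "kernel_coef (Suc i) e = of_nat k * gen_fun (Suc (Suc i)) e * (of_nat d + e) ^ m / b ^ (kernel_exp (Suc i) + 1)"
    unfolding kernel_coef_def b_def by (simp add: add.assoc)
  also have "\<dots> = of_nat k * gen_fun (Suc i) e * P * (of_nat d + e) ^ m / (b ^ N * b ^ (kernel_exp (Suc i) + 1))"
    unfolding ph using \<open>b \<noteq> 0\<close> by (simp add: field_simps)
  also have "b ^ N * b ^ (kernel_exp (Suc i) + 1) = b ^ (kernel_exp (Suc i) + N) * b"
    by (simp add: power_add algebra_simps)
  also have "\<dots> = b ^ kernel_exp i * b ^ k * b"
    by (simp only: kernel_exp_Suc power_add)
  finally have lhs: "kernel_coef (Suc i) e = of_nat k * gen_fun (Suc i) e * P * (of_nat d + e) ^ m / (b ^ kernel_exp i * b ^ k * b)" .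
  have rhs: "kernel_coef i e = of_nat k * gen_fun (Suc i) e * (of_nat d + e) ^ m / (a ^ kernel_exp i * a)"
    by (simp add: kernel_coef_def a_def)
  show ?thesis
    unfolding lhs rhs q c inv using \<open>a \<noteq> 0\<close> \<open>b \<noteq> 0\<close> by (simp add: field_simps power_divide)
qed

lemma kernel_coef_last:
  assumes "norm e < 1/2"
  shows "kernel_coef (d - 1) e = of_nat k * gen_fun d e"
proof -
  have "kernel_exp (d - 1) + 1 = m" "d - 1 + 1 = d"
    using d_ge_1 by (simp_all add: kernel_exp_def m_def mult.commute)
  moreover have "of_nat d + e \<noteq> 0"
    using add_of_nat_neq_0[of e d] assms d_ge_1 by (simp add: add.commute)
  ultimately show ?thesis by (simp add: kernel_coef_def add.commute)
qed

lemma inv_pole_coef_eq: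
  assumes "norm e < 1/2"
  shows "inv_pole_coef i e = 2 - pole_coef i e"
proof -
  have "e + of_nat i + 1 \<noteq> 0"
    using add_of_nat_neq_0[of e "i + 1"] assms by (simp add: ac_simps)
  then show ?thesis unfolding inv_pole_coef_def pole_coef_def by (simp add: field_simps)
qed

lemma inv_pole_coef_mult:
  assumes "norm e < 1/2"
  shows "inv_pole_coef i e * pole_coef (Suc i) e = 1"
proof -
  have "e + of_nat i + 1 \<noteq> 0" "e + of_nat i + 2 \<noteq> 0"
    using add_of_nat_neq_0[of e "i+1"] add_of_nat_neq_0[of e "i+2"] assms by (auto simp: add_ac)
  then show ?thesis unfolding inv_pole_coef_def pole_coef_def by (simp add: add_ac)
qed

lemma tail_factor_upd:
  assumes "t < s" "s \<le> d"
  shows "tail_factor s (z(t := w)) = tail_factor s z"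
  unfolding tail_factor_def diag_factor_def using assms by (intro arg_cong2[where f = "(*)"] prod.cong) auto

lemma tail_factor_at_upd:
  assumes "t \<le> i + 1" "i + 2 \<le> d"
  shows "tail_factor_at i w (z(t := v)) = tail_factor_at i w z"
  using assms tail_factor_upd[of t "i+2" z v] unfolding tail_factor_at_def by auto

lemma tail_factor_split:
  assumes "s + 1 \<le> d"
  shows "tail_factor s z = 1 / (z s) ^ N * ek k (z s) (z (s+1)) * (if s + 2 \<le> d then diag_factor (s+1) z else 1) * tail_factor (s+1) z"
proof -
  have "(\<Prod>l=s..d. 1 / (z l) ^ N) = 1 / (z s) ^ N * (\<Prod>l=Suc s..d. 1 / (z l) ^ N)"
    "(\<Prod>l=Suc s..d. ek k (z (l - 1)) (z l)) = ek k (z s) (z (s+1)) * (\<Prod>l=Suc (Suc s)..d. ek k (z (l - 1)) (z l))"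
    using assms by (simp_all add: prod.atLeast_Suc_atMost)
  moreover have "(\<Prod>l=Suc s..d-1. diag_factor l z) = (if s + 2 \<le> d then diag_factor (s+1) z else 1) * (\<Prod>l=Suc (Suc s)..d-1. diag_factor l z)"
    using assms by (auto simp: prod.atLeast_Suc_atMost)
  ultimately show ?thesis unfolding tail_factor_def by (simp add: mult_ac)
qed

lemma tail_factor_last: "tail_factor d z = 1 / z d ^ N * (1 / z d ^ m)"
  by (simp add: tail_factor_def)

lemma integrand_split:
  "integrand N k d j y = 1 / (y 0) ^ N * y 0 powi (int N - 2 - int j) * (y 1 - y 0) ^ j * ek k (y 0) (y 1)
     * (if 2 \<le> d then diag_factor 1 y else 1) * (of_nat d + y 0 / (y 1 - y 0)) ^ m * tail_factor 1 y"
proof -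
  have "(\<Prod>l=0..d. 1 / (y l) ^ N) = 1 / (y 0) ^ N * (\<Prod>l=1..d. 1 / (y l) ^ N)"
    "(\<Prod>l=1..d. ek k (y (l - 1)) (y l)) = ek k (y 0) (y 1) * (\<Prod>l=2..d. ek k (y (l - 1)) (y l))"
    using d_ge_1 by (simp_all add: prod.atLeast_Suc_atMost numeral_2_eq_2)
  moreover have "(\<Prod>l=1..d-1. 1 / (of_nat k * y l * (2 * y l - y (l - 1) - y (l + 1))))
      = (if 2 \<le> d then diag_factor 1 y else 1) * (\<Prod>l=2..d-1. diag_factor l y)"
    using d_ge_1 by (auto simp: prod.atLeast_Suc_atMost diag_factor_def numeral_2_eq_2)
  ultimately show ?thesis unfolding integrand_def Let_def tail_factor_def m_def
    by (simp add: mult_ac numeral_2_eq_2)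
qed

lemma tail_factor_pole:
  assumes "i + 2 \<le> d" "z (Suc i) \<noteq> 0"
  shows "z (Suc i) ^ k / (of_nat k * z (Suc i) * x) * tail_factor (Suc i) z
       = z (Suc i) ^ (k - N) * ek_tail (z (Suc i)) (z (i+2)) / x * tail_factor_at i (z (Suc i)) z"
proof -
  define w where "w = z (Suc i)"
  have "(if Suc i + 2 \<le> d then diag_factor (Suc i + 1) z else 1) * tail_factor (Suc i + 1) z = tail_factor_at i w z"
    unfolding tail_factor_at_def diag_factor_def w_def by (simp add: numeral_eq_Suc)
  then have split: "tail_factor (Suc i) z = 1 / w ^ N * (of_nat k * w * ek_tail w (z (i+2))) * tail_factor_at i w z"
    using tail_factor_split[of "Suc i" z] assms(1) by (simp add: w_def ek_eq_ek_tail mult.assoc)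
  have pow: "w ^ k = w ^ (k - N) * w ^ N"
    using N_le_k by (simp add: power_add[symmetric])
  show ?thesis
  proof (cases "x = 0")
    case False
    then show ?thesis
      unfolding w_def[symmetric] split pow using assms(2) k_neq_0 by (simp add: w_def field_simps)
  qed simp
qed

lemma kernel_num_pole_coef:
  assumes "norm e < 1/2"
  shows "kernel_coef i e * kernel_num i (pole_coef (Suc i) e * z (i+2)) z / inv_pole_coef i e
     = kernel_coef (Suc i) e * z (i+2) ^ (kernel_exp i + k) * tail_factor_at i (pole_coef (Suc i) e * z (i+2)) z"
  unfolding kernel_num_def kernel_coef_Suc[OF assms] ek_tail_homogeneous
  by (simp add: power_mult_distrib power_add mult_ac)

lemma kernel_Suc_eq:
  assumes "i + 2 \<le> d" "norm e < 1/2" "z (i+2) \<noteq> 0"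
  shows "kernel_coef i e / e ^ (j+1) * kernel_num i (pole_coef (Suc i) e * z (i+2)) z / inv_pole_coef i e
     = kernel (Suc i) e z"
proof -
  define c where "c = pole_coef (Suc i) e"
  define w where "w = z (i+2)"
  have "kernel_coef i e / e ^ (j+1) * kernel_num i (c * w) z / inv_pole_coef i e
      = (kernel_coef i e * kernel_num i (c * w) z / inv_pole_coef i e) / e ^ (j+1)"
    by (simp add: divide_inverse mult_ac)
  also have "\<dots> = kernel_coef (Suc i) e / e ^ (j+1) * (w ^ kernel_exp i * w ^ k * tail_factor_at i (c * w) z)"
    unfolding c_def w_def kernel_num_pole_coef[OF assms(2)] by (simp add: power_add divide_inverse mult_ac)
  finally have lhs: "kernel_coef i e / e ^ (j+1) * kernel_num i (c * w) z / inv_pole_coef i e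
      = kernel_coef (Suc i) e / e ^ (j+1) * (w ^ kernel_exp i * w ^ k * tail_factor_at i (c * w) z)" .
  show ?thesis
  proof (cases "i + 3 \<le> d")
    case True
    define x where "x = inv_pole_coef (Suc i) e * w - z (i+3)"
    have "tail_factor_at i (c * w) z = 1 / (of_nat k * w * x) * tail_factor (Suc (Suc i)) z"
      using True unfolding tail_factor_at_def x_def c_def w_def inv_pole_coef_eq[OF assms(2)]
      by (simp add: algebra_simps numeral_eq_Suc)
    then have tail: "w ^ k * tail_factor_at i (c * w) z
        = w ^ (k - N) * ek_tail w (z (i+3)) / x * tail_factor_at (Suc i) w z"
      using tail_factor_pole[of "Suc i" z x] True assms(3)
      by (simp add: w_def numeral_eq_Suc)
    have "kernel_exp (Suc i) = kernel_exp i + (k - N)"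
      using kernel_exp_Suc[of i] N_le_k by simp
    then have "kernel (Suc i) e z
        = kernel_coef (Suc i) e / e ^ (j+1) * (w ^ kernel_exp i * (w ^ (k - N) * ek_tail w (z (i+3)) / x * tail_factor_at (Suc i) w z))"
      using True by (simp add: kernel_def kernel_num_def x_def w_def power_add numeral_eq_Suc divide_inverse mult_ac)
    then show ?thesis
      unfolding c_def[symmetric] w_def[symmetric] lhs tail[symmetric] by (simp add: mult_ac)
  next
    case False
    then have d: "d = i + 2" using assms(1) by simp
    have coef: "kernel_coef (Suc i) e = of_nat k * gen_fun d e"
      using kernel_coef_last[OF assms(2)] d by simp
    have tail: "tail_factor_at i (c * w) z = 1 / w ^ N * (1 / w ^ m)"
      unfolding tail_factor_at_def w_def d[symmetric] using False by (simp add: tail_factor_last)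
    obtain q where "k = N + q" using N_le_k le_Suc_ex by blast
    then have "kernel_exp i + k + 1 = N + m"
      unfolding kernel_exp_def m_def by (simp add: d algebra_simps)
    then have "w ^ kernel_exp i * w ^ k * w = w ^ N * w ^ m"
      by (metis power_add power_one_right)
    then have pow: "w ^ kernel_exp i * w ^ k * (1 / w ^ N * (1 / w ^ m)) = 1 / w"
      using assms(3) by (simp add: w_def field_simps)
    have "kernel (Suc i) e z = of_nat k * gen_fun d e / e ^ (j+1) / w"
      unfolding kernel_def using False by (simp add: d w_def)
    then show ?thesis
      unfolding c_def[symmetric] w_def[symmetric] lhs coef tail pow by simp
  qed
qed

lemma integrand_moebius:
  assumes e: "norm e < 1/2" "e \<noteq> 0" and z1: "z 1 \<noteq> 0"
  defines "y \<equiv> z(0 := pole_coef 0 e * z 1)"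
  shows "integrand N k d j y * (z 1 / (1 + e)^2)
    = kernel_coef 0 e / e ^ (j+1) * z 1 ^ k * (if 2 \<le> d then diag_factor 1 y else 1) * tail_factor 1 z"
proof -
  define t where "t = 1 + e"
  define z1 where "z1 = z 1"
  define \<phi> where "\<phi> = pole_coef 0 e * z1"
  define P where "P = (\<Prod>r\<in>{0<..k}. of_nat r + of_nat k * (e::complex))"
  have "t \<noteq> 0" using add_of_nat_neq_0[of e 1] e(1) by (simp add: t_def add.commute)
  have "z1 \<noteq> 0" using z1 by (simp add: z1_def)
  have \<phi>: "\<phi> = z1 * e / t" by (simp add: \<phi>_def pole_coef_def t_def add.commute)
  have "\<phi> \<noteq> 0" using \<open>t \<noteq> 0\<close> \<open>z1 \<noteq> 0\<close> e by (simp add: \<phi>)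
  have ek_tail_0: "ek_tail (pole_coef 0 e) 1 = P / t ^ k"
    using ek_tail_pole_coef[of e 0] \<open>t \<noteq> 0\<close> by (simp add: P_def t_def add.commute)
  have coef: "kernel_coef 0 e = of_nat k * P * (of_nat d + e) ^ m / t ^ (k + 1)"
  proof -
    have "{1..k} = {0<..k}" by auto
    then have "gen_fun 1 e = P / t ^ N" by (simp add: gen_fun_def P_def t_def add.commute)
    moreover have "t ^ N * t ^ (k - N + 1) = t ^ (k + 1)"
      using N_le_k by (simp add: power_add[symmetric])
    ultimately show ?thesis
      by (simp add: kernel_coef_def kernel_exp_def t_def add.commute)
  qed
  have ek_part: "1 / \<phi> ^ N * \<phi> powi (int N - 2 - int j) * ek k \<phi> z1 = of_nat k * z1 ^ k * P / t ^ k / \<phi> ^ (j+1)"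
  proof -
    have "ek k \<phi> z1 = of_nat k * \<phi> * (z1 ^ k * (P / t ^ k))"
      unfolding ek_eq_ek_tail \<phi>_def ek_tail_homogeneous ek_tail_0 ..
    then have "1 / \<phi> ^ N * \<phi> powi (int N - 2 - int j) * ek k \<phi> z1
        = (1 / \<phi> ^ N * \<phi> powi (int N - 2 - int j) * \<phi>) * (of_nat k * z1 ^ k * P / t ^ k)"
      by (simp add: mult_ac)
    then show ?thesis
      unfolding inverse_power_mult_power_int[OF \<open>\<phi> \<noteq> 0\<close>] by simp
  qed
  have diff: "z1 - \<phi> = z1 / t" using \<open>t \<noteq> 0\<close> by (simp add: \<phi> t_def field_simps)
  have ratio: "of_nat d + \<phi> / (z1 - \<phi>) = of_nat d + e"
    unfolding diff using \<open>t \<noteq> 0\<close> \<open>z1 \<noteq> 0\<close> by (simp add: \<phi>)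
  have "tail_factor 1 y = tail_factor 1 z"
    unfolding y_def using d_ge_1 by (intro tail_factor_upd) auto
  then have "integrand N k d j y = of_nat k * z1 ^ k * P / t ^ k / \<phi> ^ (j+1) * (z1 / t) ^ j
      * (if 2 \<le> d then diag_factor 1 y else 1) * (of_nat d + e) ^ m * tail_factor 1 z"
    unfolding integrand_split using ek_part[symmetric] ratio diff[symmetric]
    by (simp add: y_def \<phi>_def z1_def mult_ac)
  then show ?thesis
    unfolding z1_def[symmetric] t_def[symmetric] using \<open>t \<noteq> 0\<close> \<open>z1 \<noteq> 0\<close> e(2)
    by (simp add: coef \<phi> field_simps power_mult_distrib power2_eq_square split del: if_split)
qed

lemma integrand_moebius_eq_kernel:
  assumes e: "norm e < 1/2" "e \<noteq> 0" and z1: "z 1 \<noteq> 0"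
  shows "integrand N k d j (z(0 := z 1 * e / (1 + e))) * (z 1 / (1 + e)^2) = kernel 0 e z"
proof -
  define y where "y = z(0 := pole_coef 0 e * z 1)"
  have "z 1 * e / (1 + e) = pole_coef 0 e * z 1" by (simp add: pole_coef_def add.commute)
  then have lhs: "integrand N k d j (z(0 := z 1 * e / (1 + e))) * (z 1 / (1 + e)^2)
      = kernel_coef 0 e / e ^ (j+1) * (z 1 ^ k * (if 2 \<le> d then diag_factor 1 y else 1) * tail_factor 1 z)"
    using integrand_moebius[of e z] e z1 by (simp add: y_def mult.assoc)
  show ?thesis
  proof (cases "2 \<le> d")
    case True
    define x where "x = inv_pole_coef 0 e * z 1 - z 2"
    have "diag_factor 1 y = 1 / (of_nat k * z 1 * x)"
      unfolding diag_factor_def y_def x_def inv_pole_coef_eq[OF e(1)] by (simp add: algebra_simps numeral_2_eq_2)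
    then have "z 1 ^ k * diag_factor 1 y * tail_factor 1 z = kernel_num 0 (z 1) z / x"
      using tail_factor_pole[of 0 z x] True z1 by (simp add: kernel_num_def kernel_exp_def numeral_2_eq_2)
    then show ?thesis
      unfolding lhs using True by (simp add: kernel_def x_def numeral_2_eq_2)
  next
    case False
    then have d: "d = 1" using d_ge_1 by simp
    have "k + 1 = N + m" unfolding m_def using N_le_k by (simp add: d)
    then have "z 1 ^ k * z 1 = z 1 ^ N * z 1 ^ m" by (metis power_add power_one_right)
    then have pow: "z 1 ^ k * (1 / z 1 ^ N * (1 / z 1 ^ m)) = 1 / z 1"
      using z1 by (simp add: field_simps)
    have "kernel_coef 0 e = of_nat k * gen_fun d e"
      using kernel_coef_last[OF e(1)] d by simp
    moreover have "tail_factor 1 z = 1 / z 1 ^ N * (1 / z 1 ^ m)"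
      using tail_factor_last[of z] d by simp
    moreover have "kernel 0 e z = of_nat k * gen_fun d e / e ^ (j+1) / z 1"
      unfolding kernel_def using False by (simp add: d)
    ultimately show ?thesis
      unfolding lhs using False pow by simp
  qed
qed

lemma gen_fun_holomorphic: "gen_fun n holomorphic_on ball 0 (1/2)"
proof -
  have "(\<Prod>r=1..n. (of_nat r + e) ^ N) \<noteq> 0" if "e \<in> ball 0 (1/2)" for e :: complex
    using add_of_nat_neq_0[of e] that by (auto simp: prod_zero_iff add.commute)
  then show ?thesis unfolding gen_fun_def by (intro holomorphic_intros) auto
qed

lemma kernel_coef_holomorphic: "kernel_coef i holomorphic_on ball 0 (1/2)"
proof -
  have "e + of_nat (i+1) \<noteq> 0" if "e \<in> ball 0 (1/2)" for e :: complex
    using add_of_nat_neq_0[of e "i+1"] that by auto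
  then show ?thesis unfolding kernel_coef_def by (intro holomorphic_intros gen_fun_holomorphic) auto
qed

lemma inv_pole_coef_holomorphic: "inv_pole_coef i holomorphic_on ball 0 (1/2)"
proof -
  have "e + of_nat i + 1 \<noteq> 0" if "e \<in> ball 0 (1/2)" for e :: complex
    using add_of_nat_neq_0[of e "i+1"] that by (auto simp: add_ac)
  then show ?thesis unfolding inv_pole_coef_def by (intro holomorphic_intros) auto
qed

lemma inv_pole_coef_neq_0: "norm e < 1/2 \<Longrightarrow> inv_pole_coef i e \<noteq> 0"
  using inv_pole_coef_mult[of e i] by auto

lemma kernel_num_holomorphic:
  assumes "z (i+2) \<noteq> 0" and "i + 3 \<le> d \<Longrightarrow> \<forall>w\<in>A. w \<noteq> 2 * z (i+2) - z (i+3)"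
  shows "(\<lambda>w. kernel_num i w z) holomorphic_on A"
proof -
  have "(\<lambda>w. tail_factor_at i w z) holomorphic_on A"
  proof (cases "i + 3 \<le> d")
    case True
    have "2 * z (i+2) - w - z (i+3) \<noteq> 0" if "w \<in> A" for w
    proof
      assume "2 * z (i+2) - w - z (i+3) = 0"
      then have "w = 2 * z (i+2) - z (i+3)" by (simp add: algebra_simps)
      with assms(2)[OF True] that show False by blast
    qed
    then have "\<forall>w\<in>A. of_nat k * z (i+2) * (2 * z (i+2) - w - z (i+3)) \<noteq> 0"
      using assms(1) k_neq_0 by simp
    then show ?thesis
      unfolding tail_factor_at_def using True by (auto intro!: holomorphic_intros)
  qed (simp add: tail_factor_at_def)
  then show ?thesis
    unfolding kernel_num_def ek_tail_def by (intro holomorphic_intros)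
qed

lemma kernel_upd:
  assumes "i + 2 \<le> d"
  shows "kernel i e (z(Suc i := w))
    = kernel_coef i e / e ^ (j+1) * kernel_num i w z / (inv_pole_coef i e * w - z (i+2))"
  using assms tail_factor_at_upd[of "Suc i" i w z w] by (simp add: kernel_def kernel_num_def)

definition generic :: "nat \<Rightarrow> (nat \<Rightarrow> complex) \<Rightarrow> bool" where
  "generic i z \<longleftrightarrow> (\<forall>l. i+1 \<le> l \<and> l \<le> d \<longrightarrow> z l \<noteq> 0) \<and>
     (\<forall>l. i+2 \<le> l \<and> l+1 \<le> d \<longrightarrow> 2 * z l - z (l-1) - z (l+1) \<noteq> 0) \<and>
     (i+2 \<le> d \<longrightarrow> (\<forall>p\<in>res_points d i z. p \<noteq> 2 * z (i+1) - z (i+2)))"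

lemma generic_upd:
  assumes "Suc i < d" and gen: "generic (Suc i) z"
    and w: "w \<notin> res_points d (Suc i) z" "i + 3 \<le> d \<Longrightarrow> w \<noteq> 2 * z (i+2) - z (i+3)"
  shows "generic i (z(Suc i := w))"
proof -
  have RP: "res_points d (Suc i) z = (\<lambda>t. of_nat t / of_nat (Suc t) * z (i+2)) ` {..Suc i}"
    using res_points_eq[OF assms(1)] by simp
  have "w \<noteq> 0" using w(1) unfolding RP by force
  have "q \<noteq> 2 * w - z (i+2)" if "q \<in> res_points d i (z(Suc i := w))" for q
  proof
    assume q: "q = 2 * w - z (i+2)"
    obtain t where "t \<le> i" and t: "q = of_nat t / of_nat (Suc t) * w"
      using \<open>q \<in> res_points d i _\<close> res_points_eq[of i d] assms(1) by auto
    have "(of_nat (Suc t) :: complex) \<noteq> 0" "(of_nat (Suc (Suc t)) :: complex) \<noteq> 0"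
      by (simp_all only: of_nat_eq_0_iff)
    then have "w = of_nat (Suc t) / of_nat (Suc (Suc t)) * z (i+2)"
      using q t by (simp add: field_simps)
    with \<open>t \<le> i\<close> have "w \<in> res_points d (Suc i) z"
      unfolding RP by (intro image_eqI[of _ _ "Suc t"]) auto
    with w(1) show False by contradiction
  qed
  moreover have "2 * (z(Suc i := w)) l - (z(Suc i := w)) (l-1) - (z(Suc i := w)) (l+1) \<noteq> 0"
    if "i + 2 \<le> l" "l + 1 \<le> d" for l
  proof (cases "l = i + 2")
    case True
    then show ?thesis using w(2) that by (auto simp: algebra_simps numeral_eq_Suc)
  next
    case False
    then show ?thesis using gen that unfolding generic_def by auto
  qed
  ultimately show ?thesis
    using gen \<open>w \<noteq> 0\<close> \<open>Suc i < d\<close> unfolding generic_def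
    by (auto simp: numeral_eq_Suc le_Suc_eq)
qed

lemma iter_res_0_eq_residue_kernel:
  assumes "generic 0 z"
  shows "iter_res d 0 (integrand N k d j) z = residue (\<lambda>e. kernel 0 e z) 0"
proof -
  define z1 where "z1 = z 1"
  define z2 where "z2 = z 2"
  have "res_points d 0 z = {0}" by (simp add: res_points_def)
  then have "z1 \<noteq> 0" and D: "2 \<le> d \<Longrightarrow> 2 * z1 - z2 \<noteq> 0"
    using assms d_ge_1 unfolding generic_def z1_def z2_def by (auto simp: numeral_2_eq_2)
  define R where "R = (if 2 \<le> d then min (norm z1) (norm (2 * z1 - z2)) else norm z1)"
  have R: "R > 0" "R \<le> norm z1" "2 \<le> d \<Longrightarrow> R \<le> norm (2 * z1 - z2)"
    using \<open>z1 \<noteq> 0\<close> D by (auto simp: R_def)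
  have F_upd: "integrand N k d j (z(0 := w)) = 1 / w ^ N * w powi (int N - 2 - int j) * (z1 - w) ^ j * ek k w z1
     * (if 2 \<le> d then 1 / (of_nat k * z1 * (2 * z1 - w - z2)) else 1) * (of_nat d + w / (z1 - w)) ^ m * tail_factor 1 z" for w
    using tail_factor_upd[of 0 1 z w] d_ge_1
    by (simp add: integrand_split diag_factor_def z1_def z2_def numeral_2_eq_2)
  have "(\<lambda>w. integrand N k d j (z(0 := w))) holomorphic_on ball 0 R - {0}"
  proof -
    have "z1 - w \<noteq> 0" if "w \<in> ball 0 R" for w using that R by auto
    moreover have "of_nat k * z1 * (2 * z1 - w - z2) \<noteq> 0" if "w \<in> ball 0 R" "2 \<le> d" for w
    proof -
      have "2 * z1 - w - z2 \<noteq> 0"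
      proof
        assume "2 * z1 - w - z2 = 0"
        then have "w = 2 * z1 - z2" by (simp add: algebra_simps)
        with that R(3) show False by simp
      qed
      then show ?thesis using \<open>z1 \<noteq> 0\<close> k_neq_0 by simp
    qed
    ultimately show ?thesis
      unfolding F_upd ek_def by (cases "2 \<le> d") (auto intro!: holomorphic_intros)
  qed
  then have "residue (\<lambda>w. integrand N k d j (z(0 := w))) 0
      = residue (\<lambda>e. integrand N k d j (z(0 := z1 * e / (1 + e))) * (z1 / (1 + e)^2)) 0"
    using R(1) \<open>z1 \<noteq> 0\<close> by (rule residue_moebius_substitution)
  also have "\<dots> = residue (\<lambda>e. kernel 0 e z) 0"
  proof (rule residue_cong)
    have "\<forall>e. e \<noteq> 0 \<and> dist e 0 < 1/2 \<longrightarrow> integrand N k d j (z(0 := z1 * e / (1 + e))) * (z1 / (1 + e)^2) = kernel 0 e z"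
      using integrand_moebius_eq_kernel \<open>z1 \<noteq> 0\<close> by (simp add: z1_def)
    then show "\<forall>\<^sub>F e in at 0. integrand N k d j (z(0 := z1 * e / (1 + e))) * (z1 / (1 + e)^2) = kernel 0 e z"
      unfolding eventually_at by (intro exI[of _ "1/2"]) auto
  qed simp
  finally show ?thesis
    using \<open>res_points d 0 z = {0}\<close> by (simp add: res_step_def)
qed

lemma pole_coef_eq_inverse:
  assumes "norm e < 1/2"
  shows "pole_coef (Suc i) e = 1 / inv_pole_coef i e"
  using inv_pole_coef_mult[OF assms, of i] inv_pole_coef_neq_0[OF assms, of i]
  by (simp add: eq_divide_eq mult.commute)

lemma eventually_pole_eq:
  "\<forall>\<^sub>F e in at 0. norm e < 1/2 \<and> c / inv_pole_coef i e = pole_coef (Suc i) e * c"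
proof -
  have "\<forall>e. e \<noteq> 0 \<and> dist e 0 < 1/2 \<longrightarrow> norm e < 1/2 \<and> c / inv_pole_coef i e = pole_coef (Suc i) e * c"
    using pole_coef_eq_inverse by simp
  then show ?thesis
    unfolding eventually_at by (intro exI[of _ "1/2"]) auto
qed

lemma residue_iter_res_Suc:
  assumes "Suc i < d" and gen: "generic (Suc i) z" and p: "p \<in> res_points d (Suc i) z"
    and IH: "\<And>z'. generic i z' \<Longrightarrow> iter_res d i (integrand N k d j) z' = residue (\<lambda>e. kernel i e z') 0"
  shows "residue (\<lambda>w. iter_res d i (integrand N k d j) (z(Suc i := w))) p =
     (if p = pole_coef (Suc i) 0 * z (i+2) then residue (\<lambda>e. kernel (Suc i) e z) 0 else 0)"
proof -
  define z2 where "z2 = z (i+2)"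
  define B where "B = res_points d (Suc i) z \<union> (if i + 3 \<le> d then {2 * z2 - z (i+3)} else {})"
  have "finite B"
    using res_points_eq[OF assms(1)] by (simp add: B_def)
  then obtain \<rho> where "\<rho> > 0" and \<rho>: "\<And>w. w \<in> ball p \<rho> \<Longrightarrow> w \<noteq> p \<Longrightarrow> w \<notin> B"
    using finite_ball_avoid[OF open_UNIV, of B p] by auto
  have "z2 \<noteq> 0" using gen assms(1) unfolding generic_def z2_def by auto
  have off_diag: "w \<noteq> 2 * z2 - z (i+3)" if "w \<in> ball p \<rho>" "i + 3 \<le> d" for w
    using \<rho>[OF that(1)] gen p that(2) unfolding generic_def B_def z2_def
    by (cases "w = p") (auto simp: numeral_eq_Suc)
  have G: "(\<lambda>w. kernel_num i w z) holomorphic_on ball p \<rho>"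
    using \<open>z2 \<noteq> 0\<close> off_diag by (intro kernel_num_holomorphic) (auto simp: z2_def)
  have R: "iter_res d i (integrand N k d j) (z(Suc i := w))
      = residue (\<lambda>e. kernel_coef i e / e ^ (j+1) * kernel_num i w z / (inv_pole_coef i e * w - z2)) 0"
    if "w \<in> ball p \<rho> - {p}" for w
  proof -
    have "generic i (z(Suc i := w))"
      using that \<rho>[of w] off_diag[of w] by (intro generic_upd[OF assms(1) gen]) (auto simp: B_def z2_def)
    then show ?thesis
      using IH kernel_upd[of i e z w for e] assms(1) by (simp add: z2_def)
  qed
  have T: "(\<lambda>e. kernel_coef i e / e ^ (j+1)) holomorphic_on ball 0 (1/2) - {0}"
    by (intro holomorphic_intros holomorphic_on_subset[OF kernel_coef_holomorphic]) auto
  have "residue (\<lambda>w. iter_res d i (integrand N k d j) (z(Suc i := w))) p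
      = (if z2 / inv_pole_coef i 0 = p
         then residue (\<lambda>e. kernel_coef i e / e ^ (j+1) * kernel_num i (z2 / inv_pole_coef i e) z / inv_pole_coef i e) 0
         else 0)"
    using \<open>\<rho> > 0\<close> T inv_pole_coef_holomorphic inv_pole_coef_neq_0 G R
    by (intro residue_residue_simple_pole) auto
  also have "z2 / inv_pole_coef i 0 = pole_coef (Suc i) 0 * z2"
    using pole_coef_eq_inverse[of 0 i] by simp
  also have "residue (\<lambda>e. kernel_coef i e / e ^ (j+1) * kernel_num i (z2 / inv_pole_coef i e) z / inv_pole_coef i e) 0
      = residue (\<lambda>e. kernel (Suc i) e z) 0"
  proof (rule residue_cong)
    show "\<forall>\<^sub>F e in at 0. kernel_coef i e / e ^ (j+1) * kernel_num i (z2 / inv_pole_coef i e) z / inv_pole_coef i e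
        = kernel (Suc i) e z"
      using eventually_pole_eq[of z2 i]
      by eventually_elim (use kernel_Suc_eq assms(1) \<open>z2 \<noteq> 0\<close> in \<open>auto simp: z2_def\<close>)
  qed simp
  finally show ?thesis unfolding z2_def by (simp only: eq_commute[of p])
qed

lemma iter_res_eq_residue_kernel:
  "i < d \<Longrightarrow> generic i z \<Longrightarrow> iter_res d i (integrand N k d j) z = residue (\<lambda>e. kernel i e z) 0"
proof (induction i arbitrary: z)
  case 0
  then show ?case using iter_res_0_eq_residue_kernel by blast
next
  case (Suc i)
  define pc where "pc = pole_coef (Suc i) 0 * z (i+2)"
  have RP: "res_points d (Suc i) z = (\<lambda>t. of_nat t / of_nat (Suc t) * z (i+2)) ` {..Suc i}"
    using res_points_eq[OF Suc.prems(1)] by simp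
  have "pc \<in> res_points d (Suc i) z"
    unfolding RP pc_def pole_coef_def by (intro image_eqI[of _ _ "Suc i"]) (auto simp: add_ac)
  have "iter_res d (Suc i) (integrand N k d j) z
      = (\<Sum>p\<in>res_points d (Suc i) z. residue (\<lambda>w. iter_res d i (integrand N k d j) (z(Suc i := w))) p)"
    by (simp add: res_step_def)
  also have "\<dots> = (\<Sum>p\<in>res_points d (Suc i) z. if p = pc then residue (\<lambda>e. kernel (Suc i) e z) 0 else 0)"
    using residue_iter_res_Suc[OF Suc.prems(1,2)] Suc.IH Suc.prems(1) by (simp add: pc_def)
  also have "\<dots> = residue (\<lambda>e. kernel (Suc i) e z) 0"
    using \<open>pc \<in> res_points d (Suc i) z\<close> RP by (simp add: sum.delta')
  finally show ?case .
qed

lemma w_num_eq: "w_num N k d j = of_nat k * (deriv ^^ j) (gen_fun d) 0 / fact j"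
proof -
  define C where "C = of_nat k * (deriv ^^ j) (gen_fun d) 0 / fact j"
  have "d = Suc (d - 1)" using d_ge_1 by simp
  then have "w_num N k d j = res_step d d (iter_res d (d - 1) (integrand N k d j)) (\<lambda>_. 0)"
    unfolding w_num_def by (metis iter_res.simps(2))
  also have "\<dots> = residue (\<lambda>w. iter_res d (d - 1) (integrand N k d j) ((\<lambda>_. 0)(d := w))) 0"
    by (simp add: res_step_def res_points_def)
  also have "\<dots> = residue (\<lambda>w. C / w ^ Suc 0) 0"
  proof (rule residue_cong)
    have "iter_res d (d - 1) (integrand N k d j) ((\<lambda>_. 0)(d := w)) = C / w ^ Suc 0" if "w \<noteq> 0" for w
    proof -
      have "generic (d - 1) ((\<lambda>_. 0)(d := w))" unfolding generic_def using that d_ge_1 by auto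
      then have "iter_res d (d - 1) (integrand N k d j) ((\<lambda>_. 0)(d := w))
          = residue (\<lambda>e. kernel (d - 1) e ((\<lambda>_. 0)(d := w))) 0"
        using d_ge_1 by (intro iter_res_eq_residue_kernel) auto
      also have "\<dots> = residue (\<lambda>e. (of_nat k / w * gen_fun d e) / e ^ Suc j) 0"
        using d_ge_1 by (simp add: kernel_def field_simps)
      also have "\<dots> = (deriv ^^ j) (\<lambda>e. of_nat k / w * gen_fun d e) 0 / fact j"
        by (rule residue_holomorphic_over_power'[of "ball 0 (1/2)"])
          (auto intro!: holomorphic_intros gen_fun_holomorphic)
      also have "(deriv ^^ j) (\<lambda>e. of_nat k / w * gen_fun d e) 0 = of_nat k / w * (deriv ^^ j) (gen_fun d) 0"
        by (rule higher_deriv_cmult[of _ "ball 0 (1/2)"]) (auto intro: gen_fun_holomorphic)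
      also have "\<dots> / fact j = C / w ^ Suc 0"
        by (simp add: C_def field_simps)
      finally show ?thesis .
    qed
    then show "\<forall>\<^sub>F w in at 0. iter_res d (d - 1) (integrand N k d j) ((\<lambda>_. 0)(d := w)) = C / w ^ Suc 0"
      by (auto simp: eventually_at_filter)
  qed simp
  also have "\<dots> = (deriv ^^ 0) (\<lambda>_. C) 0 / fact 0"
    by (rule residue_holomorphic_over_power'[of UNIV]) auto
  finally show ?thesis by (simp add: C_def)
qed

lemma gen_fun_of_real:
  "gen_fun n (of_real x) = of_real ((\<Prod>r=1..k*n. real r + real k * x) / (\<Prod>r=1..n. (real r + x) ^ N))"
  unfolding gen_fun_def by (simp add: of_real_prod)

end

theorem theorem2:
  fixes N k d j :: nat
  assumes "2 \<le> N" and "N \<le> k" and "1 \<le> d"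
  shows "w_num N k d j / of_nat k =
    complex_of_real ((deriv ^^ j)
       (\<lambda>\<epsilon>::real. (\<Prod>r=1..k*d. real r + real k * \<epsilon>) / (\<Prod>r=1..d. (real r + \<epsilon>) ^ N)) 0
     / fact j)"
proof -
  interpret iterated_residue N k d j using assms by unfold_locales
  have "(deriv ^^ j) (gen_fun d) (of_real 0) =
      of_real ((deriv ^^ j) (\<lambda>\<epsilon>. (\<Prod>r=1..k*d. real r + real k * \<epsilon>) / (\<Prod>r=1..d. (real r + \<epsilon>) ^ N)) 0)"
    by (rule higher_deriv_of_real[of _ "1/2"]) (auto intro: gen_fun_holomorphic simp: gen_fun_of_real)
  then show ?thesis using k_neq_0 by (simp add: w_num_eq)
qed

end
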